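(* For every finite simple graph $G$, $\operatorname{sdim}(G+K_1)>\operatorname{sdim}G$.
   Context: $G+K_1$ is $G$ together with one new vertex adjacent to all vertices of $G$. A unit-distance embedding of a graph $G$ in $\mathbb{R}^n$ is an injective map $f$ from the vertex set of $G$ to $\mathbb{R}^n$ such that $|f(u)-f(v)|=1$ for every edge $uv$ and no point $f(w)$ lies on the segment $[f(u),f(v)]$ for an edge $uv$ with $w\notin\{u,v\}$. $G$ admits a spherical embedding of dimension $k$ and radius $r$ if $G$ has a unit-distance embedding in $\mathbb{R}^k$ all of whose vertices lie on a sphere $\{x\in\mathbb{R}^k:|x-c|=r\}$. The spherical dimension $\operatorname{sdim}G$ is the least $k$ such that $G$ admits a spherical embedding of dimension $k$ and some radius $r<1$; by convention $\operatorname{sdim}$ of the graph with no vertices is $-\infty$ and $\operatorname{sdim}K_1=0$. *)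

theory Defs
  imports "HOL-Analysis.Analysis"
begin

definition simple_graph :: "'a set \<Rightarrow> ('a \<Rightarrow> 'a \<Rightarrow> bool) \<Rightarrow> bool" where
  "simple_graph V E \<longleftrightarrow> finite V \<and> (\<forall>u v. E u v \<longrightarrow> u \<in> V \<and> v \<in> V)
     \<and> (\<forall>u v. E u v \<longrightarrow> E v u) \<and> (\<forall>u. \<not> E u u)"

text \<open>G + K1: the new vertex is None, old vertices are Some v.\<close>
definition cone_V :: "'a set \<Rightarrow> 'a option set" where
  "cone_V V = insert None (Some ` V)"

definition cone_E :: "'a set \<Rightarrow> ('a \<Rightarrow> 'a \<Rightarrow> bool) \<Rightarrow> 'a option \<Rightarrow> 'a option \<Rightarrow> bool" where
  "cone_E V E x y = (case (x, y) of
      (Some u, Some v) \<Rightarrow> E u v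
    | (None, Some v) \<Rightarrow> v \<in> V
    | (Some u, None) \<Rightarrow> u \<in> V
    | (None, None) \<Rightarrow> False)"

text \<open>Points of R^k are encoded as functions nat \<Rightarrow> real vanishing from index k on.\<close>
definition in_dim :: "nat \<Rightarrow> (nat \<Rightarrow> real) \<Rightarrow> bool" where
  "in_dim k x \<longleftrightarrow> (\<forall>i\<ge>k. x i = 0)"

definition edist :: "nat \<Rightarrow> (nat \<Rightarrow> real) \<Rightarrow> (nat \<Rightarrow> real) \<Rightarrow> real" where
  "edist k x y = sqrt (\<Sum>i<k. (x i - y i)\<^sup>2)"

definition on_segment :: "(nat \<Rightarrow> real) \<Rightarrow> (nat \<Rightarrow> real) \<Rightarrow> (nat \<Rightarrow> real) \<Rightarrow> bool" where
  "on_segment w u v \<longleftrightarrow> (\<exists>t\<in>{0..1::real}. w = (\<lambda>i. (1 - t) * u i + t * v i))"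

definition unit_dist_emb ::
  "nat \<Rightarrow> 'a set \<Rightarrow> ('a \<Rightarrow> 'a \<Rightarrow> bool) \<Rightarrow> ('a \<Rightarrow> nat \<Rightarrow> real) \<Rightarrow> bool" where
  "unit_dist_emb k V E f \<longleftrightarrow>
     (\<forall>v\<in>V. in_dim k (f v)) \<and> inj_on f V \<and>
     (\<forall>u\<in>V. \<forall>v\<in>V. E u v \<longrightarrow> edist k (f u) (f v) = 1) \<and>
     (\<forall>u\<in>V. \<forall>v\<in>V. \<forall>w\<in>V. E u v \<and> w \<noteq> u \<and> w \<noteq> v \<longrightarrow> \<not> on_segment (f w) (f u) (f v))"

definition spherical_emb :: "nat \<Rightarrow> real \<Rightarrow> 'a set \<Rightarrow> ('a \<Rightarrow> 'a \<Rightarrow> bool) \<Rightarrow> bool" where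
  "spherical_emb k r V E \<longleftrightarrow>
     (\<exists>f c. unit_dist_emb k V E f \<and> in_dim k c \<and> (\<forall>v\<in>V. edist k (f v) c = r))"

definition sdim :: "'a set \<Rightarrow> ('a \<Rightarrow> 'a \<Rightarrow> bool) \<Rightarrow> ereal" where
  "sdim V E = (if V = {} then -\<infinity>
     else ereal (real (LEAST k. \<exists>r<1. spherical_emb k r V E)))"

end

theory Submission imports Defs begin

text \<open>In a spherical embedding of \<open>G + K\<^sub>1\<close> with radius \<open>r < 1\<close>, centre \<open>c\<close> and apex \<open>a\<close>,
  every vertex of \<open>G\<close> lies both on the unit sphere around \<open>a\<close> and on the sphere of radius
  \<open>r\<close> around \<open>c\<close>. Their intersection lies in a hyperplane orthogonal to \<open>c - a\<close>, and is a
  sphere of radius at most \<open>r\<close> inside it. A Householder reflection followed by a translation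
  moves this hyperplane onto the first \<open>k - 1\<close> coordinates, giving a spherical embedding of
  \<open>G\<close> in one dimension less with radius still below \<open>1\<close>. The vertices of a regular simplex
  show that the least dimension in the definition of \<open>sdim\<close> is attained.\<close>

definition dot :: "nat \<Rightarrow> (nat \<Rightarrow> real) \<Rightarrow> (nat \<Rightarrow> real) \<Rightarrow> real" where
  "dot k x y = (\<Sum>i<k. x i * y i)"

definition coord_vec :: "nat \<Rightarrow> nat \<Rightarrow> real" where
  "coord_vec n = (\<lambda>i. if i = n then 1 else 0)"

lemma dot_commute: "dot k x y = dot k y x"
  by (simp add: dot_def mult.commute)

lemma dot_lincomb_right: "dot k z (\<lambda>i. a * x i + b * y i) = a * dot k z x + b * dot k z y"
  by (simp add: dot_def sum.distrib sum_distrib_left algebra_simps)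

lemma dot_diff_left: "dot k (\<lambda>i. x i - y i) z = dot k x z - dot k y z"
  by (simp add: dot_def sum_subtractf algebra_simps)

lemma dot_diff_right: "dot k z (\<lambda>i. x i - y i) = dot k z x - dot k z y"
  by (simp add: dot_def sum_subtractf algebra_simps)

lemma dot_scale_left: "dot k (\<lambda>i. a * x i) z = a * dot k x z"
  by (simp add: dot_def sum_distrib_left algebra_simps)

lemma dot_scale_right: "dot k z (\<lambda>i. a * x i) = a * dot k z x"
  by (simp add: dot_def sum_distrib_left algebra_simps)

lemma dot_self_nonneg: "dot k x x \<ge> 0"
  unfolding dot_def by (rule sum_nonneg) simp

lemma dot_self_eq_0: "dot k x x = 0 \<Longrightarrow> i < k \<Longrightarrow> x i = 0"
  unfolding dot_def by (subst (asm) sum_nonneg_eq_0_iff) auto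

lemma dot_coord_vec: "n < k \<Longrightarrow> dot k z (coord_vec n) = z n"
  by (simp add: dot_def coord_vec_def if_distrib cong: if_cong)

lemma edist_eq_sqrt_dot: "edist k x y = sqrt (dot k (\<lambda>i. x i - y i) (\<lambda>i. x i - y i))"
  by (simp add: edist_def dot_def power2_eq_square)

lemma dot_diff_self_if_edist:
  "edist k x y = r \<Longrightarrow> dot k (\<lambda>i. x i - y i) (\<lambda>i. x i - y i) = r\<^sup>2"
  using dot_self_nonneg by (auto simp: edist_eq_sqrt_dot)

lemma edist_eq_0_imp_eq:
  assumes "in_dim k x" "in_dim k y" "edist k x y = 0"
  shows "x = y"
proof
  fix i
  have "dot k (\<lambda>i. x i - y i) (\<lambda>i. x i - y i) = 0"
    using dot_diff_self_if_edist[OF assms(3)] by simp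
  then show "x i = y i"
    using dot_self_eq_0[of k "\<lambda>i. x i - y i" i] assms(1,2)
    by (cases "i < k") (auto simp: in_dim_def)
qed

lemma edist_nonneg: "edist k x y \<ge> 0"
  by (simp add: edist_def sum_nonneg)

lemma edist_commute: "edist k x y = edist k y x"
  by (simp add: edist_def power2_commute)

lemma edist_Suc: "edist (Suc n) x y = sqrt ((edist n x y)\<^sup>2 + (x n - y n)\<^sup>2)"
  by (simp add: edist_def sum_nonneg)

definition reflect :: "nat \<Rightarrow> (nat \<Rightarrow> real) \<Rightarrow> (nat \<Rightarrow> real) \<Rightarrow> nat \<Rightarrow> real" where
  "reflect k w x = (\<lambda>i. x i - (2 * dot k w x / dot k w w) * w i)"

lemma dot_reflect: "dot k (reflect k w x) (reflect k w y) = dot k x y"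
proof -
  define W where "W = dot k w w"
  have expand: "dot k (\<lambda>i. x i - a * w i) (\<lambda>i. y i - b * w i) =
      dot k x y - b * dot k x w - a * dot k w y + a * b * W" for a b
    unfolding W_def dot_diff_left dot_diff_right dot_scale_left dot_scale_right
    by (simp add: dot_commute[of k y w] algebra_simps)
  show ?thesis
  proof (cases "W = 0")
    case True
    then show ?thesis unfolding reflect_def using expand[of 0 0] by (simp add: W_def)
  next
    case False
    then show ?thesis unfolding reflect_def W_def[symmetric] expand
      by (simp add: dot_commute[of k x w] field_simps power2_eq_square)
  qed
qed

lemma reflect_lincomb:
  "reflect k w (\<lambda>i. a * x i + b * y i) = (\<lambda>i. a * reflect k w x i + b * reflect k w y i)"
  unfolding reflect_def dot_lincomb_right by (rule ext) (simp add: add_divide_distrib algebra_simps)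

lemma reflect_diff: "reflect k w (\<lambda>i. x i - y i) = (\<lambda>i. reflect k w x i - reflect k w y i)"
  unfolding reflect_def dot_diff_right by (rule ext) (simp add: diff_divide_distrib algebra_simps)

lemma reflect_reflect: "reflect k w (reflect k w x) = x"
proof (cases "dot k w w = 0")
  case True
  then show ?thesis by (simp add: reflect_def)
next
  case False
  then have "dot k w (reflect k w x) = - dot k w x"
    unfolding reflect_def dot_diff_right dot_scale_right by simp
  with False show ?thesis by (simp add: reflect_def)
qed

lemma in_dim_reflect: "in_dim k w \<Longrightarrow> in_dim k x \<Longrightarrow> in_dim k (reflect k w x)"
  by (simp add: in_dim_def reflect_def)

lemma reflect_swap:
  assumes "in_dim k u" "in_dim k e" "dot k u u = dot k e e"
  shows "reflect k (\<lambda>i. u i - e i) e = u"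
proof -
  define w where "w = (\<lambda>i. u i - e i)"
  have we: "dot k w e = dot k u e - dot k e e"
    unfolding w_def dot_diff_left ..
  have ww: "dot k w w = - 2 * dot k w e"
    unfolding we unfolding w_def dot_diff_left dot_diff_right
    using assms(3) by (simp add: dot_commute[of k e u])
  show ?thesis
  proof (cases "dot k w w = 0")
    case True
    then have "w i = 0" for i
      using dot_self_eq_0[of k w i] assms(1,2) by (cases "i < k") (auto simp: in_dim_def w_def)
    then have "u = e" by (auto simp: w_def fun_eq_iff)
    then show ?thesis by (simp add: reflect_def)
  next
    case False
    then show ?thesis unfolding w_def[symmetric] reflect_def ww
      by (rule_tac ext) (simp add: w_def)
  qed
qed

text \<open>The reflection in \<open>u - e\<^sub>n\<close> swaps the unit vectors \<open>u\<close> and \<open>e\<^sub>n\<close>.\<close>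
lemma reflect_coordinate:
  assumes "in_dim k u" "dot k u u = 1" "n < k"
  shows "reflect k (\<lambda>i. u i - coord_vec n i) z n = dot k z u"
proof -
  define H where "H = reflect k (\<lambda>i. u i - coord_vec n i)"
  have "in_dim k (coord_vec n)" using assms(3) by (simp add: in_dim_def coord_vec_def)
  moreover have "dot k (coord_vec n) (coord_vec n) = 1"
    using dot_coord_vec[OF assms(3), of "coord_vec n"] by (simp add: coord_vec_def)
  ultimately have "H (coord_vec n) = u"
    unfolding H_def using assms(1,2) by (simp add: reflect_swap)
  then have "H u = coord_vec n"
    by (metis H_def reflect_reflect)
  have "H z n = dot k (H z) (H u)"
    using \<open>H u = coord_vec n\<close> assms(3) by (simp add: dot_coord_vec)
  also have "\<dots> = dot k z u"
    unfolding H_def by (rule dot_reflect)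
  finally show ?thesis unfolding H_def .
qed

definition motion ::
  "nat \<Rightarrow> (nat \<Rightarrow> real) \<Rightarrow> (nat \<Rightarrow> real) \<Rightarrow> (nat \<Rightarrow> real) \<Rightarrow> (nat \<Rightarrow> real) \<Rightarrow> nat \<Rightarrow> real"
  where "motion k w a b x = (\<lambda>i. reflect k w (\<lambda>j. x j - a j) i - b i)"

lemma in_dim_motion:
  "in_dim k w \<Longrightarrow> in_dim k a \<Longrightarrow> in_dim k b \<Longrightarrow> in_dim k x \<Longrightarrow> in_dim k (motion k w a b x)"
  using in_dim_reflect[of k w "\<lambda>j. x j - a j"] by (simp add: in_dim_def motion_def)

lemma edist_motion: "edist k (motion k w a b x) (motion k w a b y) = edist k x y"
proof -
  have "(\<lambda>i. motion k w a b x i - motion k w a b y i) =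
      (\<lambda>i. reflect k w (\<lambda>j. x j - a j) i - reflect k w (\<lambda>j. y j - a j) i)"
    by (simp add: motion_def)
  also have "\<dots> = reflect k w (\<lambda>i. (x i - a i) - (y i - a i))"
    by (rule reflect_diff[symmetric])
  also have "(\<lambda>i. (x i - a i) - (y i - a i)) = (\<lambda>i. x i - y i)"
    by simp
  finally show ?thesis
    by (simp only: edist_eq_sqrt_dot dot_reflect)
qed

lemma motion_affine:
  "motion k w a b (\<lambda>i. (1 - t) * x i + t * y i) =
    (\<lambda>i. (1 - t) * motion k w a b x i + t * motion k w a b y i)"
proof -
  have shift: "(\<lambda>j. (1 - t) * x j + t * y j - a j) = (\<lambda>j. (1 - t) * (x j - a j) + t * (y j - a j))"
    by (simp add: algebra_simps)
  show ?thesis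
    unfolding motion_def shift reflect_lincomb by (rule ext) (simp add: algebra_simps)
qed

lemma unit_dist_emb_comp_affine_isometry:
  assumes emb: "unit_dist_emb k V E f"
    and dim: "\<And>x. in_dim k x \<Longrightarrow> in_dim k (T x)"
    and iso: "\<And>x y. edist k (T x) (T y) = edist k x y"
    and affine: "\<And>x y t. T (\<lambda>i. (1 - t) * x i + t * y i) = (\<lambda>i. (1 - t) * T x i + t * T y i)"
  shows "unit_dist_emb k V E (T \<circ> f)"
proof -
  have dimf: "\<forall>v\<in>V. in_dim k (f v)" and injf: "inj_on f V"
    and unit: "\<forall>u\<in>V. \<forall>v\<in>V. E u v \<longrightarrow> edist k (f u) (f v) = 1"
    and seg: "\<forall>u\<in>V. \<forall>v\<in>V. \<forall>w\<in>V. E u v \<and> w \<noteq> u \<and> w \<noteq> v \<longrightarrow> \<not> on_segment (f w) (f u) (f v)"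
    using emb by (simp_all add: unit_dist_emb_def)
  have T_inj: "x = y" if "in_dim k x" "in_dim k y" "T x = T y" for x y
    using edist_eq_0_imp_eq[OF that(1,2)] iso[of x y] that(3) by (simp add: edist_def)
  have T_seg: "on_segment w u v" if Tseg: "on_segment (T w) (T u) (T v)"
    and "in_dim k w" "in_dim k u" "in_dim k v" for w u v
  proof -
    obtain t where t: "t \<in> {0..1}" "T w = (\<lambda>i. (1 - t) * T u i + t * T v i)"
      using Tseg unfolding on_segment_def by blast
    have "in_dim k (\<lambda>i. (1 - t) * u i + t * v i)"
      using that(3,4) by (simp add: in_dim_def)
    with t(2) have "w = (\<lambda>i. (1 - t) * u i + t * v i)"
      using T_inj[OF that(2)] by (simp add: affine)
    with t(1) show ?thesis by (auto simp: on_segment_def)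
  qed
  show ?thesis
    unfolding unit_dist_emb_def
  proof (intro conjI)
    show "\<forall>v\<in>V. in_dim k ((T \<circ> f) v)" using dimf dim by simp
    show "inj_on (T \<circ> f) V"
      using injf dimf T_inj by (auto simp: inj_on_def)
    show "\<forall>u\<in>V. \<forall>v\<in>V. E u v \<longrightarrow> edist k ((T \<circ> f) u) ((T \<circ> f) v) = 1"
      using unit iso by simp
    show "\<forall>u\<in>V. \<forall>v\<in>V. \<forall>w\<in>V. E u v \<and> w \<noteq> u \<and> w \<noteq> v \<longrightarrow>
        \<not> on_segment ((T \<circ> f) w) ((T \<circ> f) u) ((T \<circ> f) v)"
      using seg dimf T_seg by (metis comp_apply)
  qed
qed

lemma unit_dist_emb_drop_coordinate:
  assumes emb: "unit_dist_emb (Suc n) V E f" and zero: "\<And>v. v \<in> V \<Longrightarrow> f v n = 0"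
  shows "unit_dist_emb n V E f"
proof -
  have dim: "in_dim n (f v)" if "v \<in> V" for v
  proof -
    have "in_dim (Suc n) (f v)" using emb that by (simp add: unit_dist_emb_def)
    with zero[OF that] show ?thesis
      unfolding in_dim_def by (metis Suc_le_eq le_neq_implies_less)
  qed
  have "edist n (f u) (f v) = edist (Suc n) (f u) (f v)" if "u \<in> V" "v \<in> V" for u v
    using zero[OF that(1)] zero[OF that(2)] by (simp add: edist_Suc edist_nonneg)
  with emb dim show ?thesis by (simp add: unit_dist_emb_def)
qed

lemma spherical_emb_drop_coordinate:
  assumes emb: "unit_dist_emb (Suc n) V E f" and zero: "\<And>v. v \<in> V \<Longrightarrow> f v n = 0"
    and sphere: "\<And>v. v \<in> V \<Longrightarrow> edist (Suc n) (f v) c = r"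
  shows "spherical_emb n (sqrt (r\<^sup>2 - (c n)\<^sup>2)) V E"
proof -
  define c' where "c' = (\<lambda>i. if i < n then c i else 0)"
  have "edist n (f v) c' = sqrt (r\<^sup>2 - (c n)\<^sup>2)" if "v \<in> V" for v
  proof -
    have "edist n (f v) c' = edist n (f v) c"
      by (simp add: edist_def c'_def)
    moreover have "r = sqrt ((edist n (f v) c)\<^sup>2 + (c n)\<^sup>2)"
      using sphere[OF that] zero[OF that] by (simp add: edist_Suc)
    then have "(edist n (f v) c)\<^sup>2 = r\<^sup>2 - (c n)\<^sup>2"
      by (simp add: add_nonneg_nonneg)
    ultimately show ?thesis
      by (metis edist_nonneg real_sqrt_unique)
  qed
  moreover have "in_dim n c'" by (simp add: in_dim_def c'_def)
  ultimately show ?thesis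
    using unit_dist_emb_drop_coordinate[OF emb zero] by (auto simp: spherical_emb_def)
qed

lemma dot_eq_half_if_spheres:
  assumes "edist k y a = 1" "edist k y c = r" "edist k c a = r"
  shows "dot k (\<lambda>i. y i - a i) (\<lambda>i. c i - a i) = 1 / 2"
proof -
  define z where "z = (\<lambda>i. y i - a i)"
  define d where "d = (\<lambda>i. c i - a i)"
  have "(\<lambda>i. y i - c i) = (\<lambda>i. z i - d i)" by (simp add: z_def d_def)
  then have "dot k (\<lambda>i. z i - d i) (\<lambda>i. z i - d i) = r\<^sup>2"
    using dot_diff_self_if_edist[OF assms(2)] by simp
  moreover have "dot k z z = 1" "dot k d d = r\<^sup>2"
    using dot_diff_self_if_edist[OF assms(1)] dot_diff_self_if_edist[OF assms(3)]
    by (simp_all add: z_def d_def)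
  ultimately show ?thesis
    unfolding z_def[symmetric] d_def[symmetric] dot_diff_left dot_diff_right
    by (simp add: dot_commute[of k d z])
qed

lemma motion_onto_coordinate_hyperplane:
  assumes "in_dim k a" "in_dim k u" "dot k u u = 1" "n < k"
  obtains T where "\<And>x. in_dim k x \<Longrightarrow> in_dim k (T x)"
    and "\<And>x y. edist k (T x) (T y) = edist k x y"
    and "\<And>x y t. T (\<lambda>i. (1 - t) * x i + t * y i) = (\<lambda>i. (1 - t) * T x i + t * T y i)"
    and "\<And>x. T x n = dot k (\<lambda>i. x i - a i) u - h"
proof
  define w where "w = (\<lambda>i. u i - coord_vec n i)"
  define b where "b = (\<lambda>i. h * coord_vec n i)"
  have "in_dim k w" "in_dim k b"
    using assms(2,4) by (auto simp: in_dim_def coord_vec_def w_def b_def)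
  then show "in_dim k (motion k w a b x)" if "in_dim k x" for x
    using in_dim_motion assms(1) that by blast
  show "edist k (motion k w a b x) (motion k w a b y) = edist k x y" for x y
    by (rule edist_motion)
  show "motion k w a b (\<lambda>i. (1 - t) * x i + t * y i) =
      (\<lambda>i. (1 - t) * motion k w a b x i + t * motion k w a b y i)" for x y t
    by (rule motion_affine)
  show "motion k w a b x n = dot k (\<lambda>i. x i - a i) u - h" for x
    using reflect_coordinate[OF assms(2-4)] by (simp add: motion_def w_def b_def coord_vec_def)
qed

lemma spherical_emb_of_apex:
  assumes emb: "unit_dist_emb k V E f" and "V \<noteq> {}" and "r < 1"
    and dim: "in_dim k a" "in_dim k c"
    and apex: "\<And>v. v \<in> V \<Longrightarrow> edist k (f v) a = 1"
    and sphere: "\<And>v. v \<in> V \<Longrightarrow> edist k (f v) c = r" and "edist k c a = r"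
  obtains n r' where "k = Suc n" "r' < 1" "spherical_emb n r' V E"
proof -
  obtain v0 where v0: "v0 \<in> V" using \<open>V \<noteq> {}\<close> by blast
  have "k \<noteq> 0"
  proof
    assume "k = 0"
    with apex[OF v0] show False by (simp add: edist_def)
  qed
  then obtain n where k: "k = Suc n" by (cases k) auto
  have "r \<noteq> 0"
  proof
    assume "r = 0"
    with \<open>edist k c a = r\<close> dim have "c = a" by (simp add: edist_eq_0_imp_eq)
    with apex[OF v0] sphere[OF v0] \<open>r = 0\<close> show False by simp
  qed
  with \<open>edist k c a = r\<close> edist_nonneg[of k c a] have "r > 0" by linarith
  define u where "u = (\<lambda>i. (1 / r) * (c i - a i))"
  have "in_dim k u" using dim by (simp add: in_dim_def u_def)
  moreover have "dot k u u = 1"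
    using dot_diff_self_if_edist[OF \<open>edist k c a = r\<close>] \<open>r > 0\<close>
    unfolding u_def dot_scale_left dot_scale_right by (simp add: power2_eq_square)
  ultimately obtain T where T_dim: "\<And>x. in_dim k x \<Longrightarrow> in_dim k (T x)"
    and T_iso: "\<And>x y. edist k (T x) (T y) = edist k x y"
    and T_affine: "\<And>x y t. T (\<lambda>i. (1 - t) * x i + t * y i) = (\<lambda>i. (1 - t) * T x i + t * T y i)"
    and T_coord: "\<And>x. T x n = dot k (\<lambda>i. x i - a i) u - 1 / (2 * r)"
    using motion_onto_coordinate_hyperplane dim(1) k by blast
  have "unit_dist_emb k V E (T \<circ> f)"
    using emb T_dim T_iso T_affine by (rule unit_dist_emb_comp_affine_isometry)
  moreover have "(T \<circ> f) v n = 0" if "v \<in> V" for v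
    unfolding comp_apply T_coord u_def dot_scale_right
      dot_eq_half_if_spheres[OF apex[OF that] sphere[OF that] \<open>edist k c a = r\<close>]
    by simp
  moreover have "edist k ((T \<circ> f) v) (T c) = r" if "v \<in> V" for v
    using sphere[OF that] T_iso by simp
  ultimately have "spherical_emb n (sqrt (r\<^sup>2 - (T c n)\<^sup>2)) V E"
    unfolding k by (rule spherical_emb_drop_coordinate)
  moreover have "sqrt (r\<^sup>2 - (T c n)\<^sup>2) \<le> r"
    using \<open>r > 0\<close> real_sqrt_le_mono[of "r\<^sup>2 - (T c n)\<^sup>2" "r\<^sup>2"] by simp
  with \<open>r < 1\<close> have "sqrt (r\<^sup>2 - (T c n)\<^sup>2) < 1" by linarith
  ultimately show ?thesis using k that by blast
qed

lemma unit_dist_emb_comp_subgraph: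
  assumes emb: "unit_dist_emb k W E' F"
    and maps: "\<And>v. v \<in> V \<Longrightarrow> g v \<in> W" and "inj_on g V"
    and edges: "\<And>u v. E u v \<Longrightarrow> E' (g u) (g v)"
  shows "unit_dist_emb k V E (F \<circ> g)"
proof -
  have dim: "\<forall>v\<in>W. in_dim k (F v)" and inj: "inj_on F W"
    and unit: "\<forall>u\<in>W. \<forall>v\<in>W. E' u v \<longrightarrow> edist k (F u) (F v) = 1"
    and seg: "\<forall>u\<in>W. \<forall>v\<in>W. \<forall>w\<in>W. E' u v \<and> w \<noteq> u \<and> w \<noteq> v \<longrightarrow> \<not> on_segment (F w) (F u) (F v)"
    using emb by (simp_all add: unit_dist_emb_def)
  have "inj_on F (g ` V)"
    using inj maps by (blast intro: inj_on_subset)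
  with \<open>inj_on g V\<close> have "inj_on (F \<circ> g) V"
    by (rule comp_inj_on)
  moreover have "\<not> on_segment (F (g w)) (F (g u)) (F (g v))"
    if "u \<in> V" "v \<in> V" "w \<in> V" "E u v" "w \<noteq> u" "w \<noteq> v" for u v w
  proof -
    have "g w \<noteq> g u" "g w \<noteq> g v"
      using inj_onD[OF \<open>inj_on g V\<close>] that by blast+
    with seg maps edges that show ?thesis by blast
  qed
  ultimately show ?thesis
    using dim unit maps edges by (simp add: unit_dist_emb_def)
qed

lemma spherical_emb_cone:
  assumes "spherical_emb k r (cone_V V) (cone_E V E)" "r < 1" "V \<noteq> {}"
  obtains n r' where "k = Suc n" "r' < 1" "spherical_emb n r' V E"
proof -
  obtain F c where F: "unit_dist_emb k (cone_V V) (cone_E V E) F"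
    and "in_dim k c" and sphere: "\<forall>v\<in>cone_V V. edist k (F v) c = r"
    using assms(1) by (auto simp: spherical_emb_def)
  have apex_in: "None \<in> cone_V V" and base_in: "\<And>v. v \<in> V \<Longrightarrow> Some v \<in> cone_V V"
    by (simp_all add: cone_V_def)
  have "in_dim k (F None)"
    using F apex_in by (simp add: unit_dist_emb_def)
  have apex: "edist k (F (Some v)) (F None) = 1" if "v \<in> V" for v
    using F base_in[OF that] apex_in that by (simp add: unit_dist_emb_def cone_E_def)
  have "unit_dist_emb k V E (F \<circ> Some)"
    by (rule unit_dist_emb_comp_subgraph[OF F]) (simp_all add: base_in cone_E_def)
  then show ?thesis
  proof (rule spherical_emb_of_apex[where a = "F None" and c = c and r = r])
    show "edist k ((F \<circ> Some) v) (F None) = 1" if "v \<in> V" for v using apex that by simp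
    show "edist k ((F \<circ> Some) v) c = r" if "v \<in> V" for v
      using sphere base_in[OF that] by simp
    show "edist k c (F None) = r" using sphere apex_in by (simp add: edist_commute)
  qed (use assms(2,3) \<open>in_dim k c\<close> \<open>in_dim k (F None)\<close> that in auto)
qed

lemma sum_coord_vec: "i < k \<Longrightarrow> (\<Sum>l<k. coord_vec i l) = 1"
  by (simp add: coord_vec_def)

lemma edist_coord_vecs:
  assumes "i < k" "j < k" "i \<noteq> j"
  shows "edist k (\<lambda>l. s * coord_vec i l) (\<lambda>l. s * coord_vec j l) = sqrt 2 * \<bar>s\<bar>"
proof -
  have "(\<Sum>l<k. (s * coord_vec i l - s * coord_vec j l)\<^sup>2) =
      (\<Sum>l<k. s\<^sup>2 * coord_vec i l + s\<^sup>2 * coord_vec j l)"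
    by (rule sum.cong) (use assms(3) in \<open>auto simp: coord_vec_def\<close>)
  also have "\<dots> = 2 * s\<^sup>2"
    using assms(1,2) by (simp add: sum.distrib sum_distrib_left[symmetric] sum_coord_vec)
  finally show ?thesis
    by (simp add: edist_def real_sqrt_mult)
qed

lemma edist_coord_vec_0:
  assumes "i < k"
  shows "edist k (\<lambda>l. s * coord_vec i l) (\<lambda>l. 0) = \<bar>s\<bar>"
proof -
  have "(\<Sum>l<k. (s * coord_vec i l - 0)\<^sup>2) = (\<Sum>l<k. s\<^sup>2 * coord_vec i l)"
    by (rule sum.cong) (auto simp: coord_vec_def)
  also have "\<dots> = s\<^sup>2"
    using assms by (simp add: sum_distrib_left[symmetric] sum_coord_vec)
  finally show ?thesis
    by (simp add: edist_def)
qed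

lemma spherical_emb_simplex:
  assumes "finite W" and irrefl: "\<And>x. \<not> E x x"
  shows "spherical_emb (card W) (sqrt (1/2)) W E"
proof -
  obtain q where q: "bij_betw q W {0..<card W}" using ex_bij_betw_finite_nat[OF assms(1)] by blast
  have q_lt: "q x < card W" if "x \<in> W" for x using q that by (auto simp: bij_betw_def)
  have q_inj: "inj_on q W" using q by (simp add: bij_betw_def)
  define f where "f = (\<lambda>x l. sqrt (1/2) * coord_vec (q x) l)"
  have dim: "in_dim (card W) (f x)" if "x \<in> W" for x
    using q_lt[OF that] by (simp add: in_dim_def f_def coord_vec_def)
  have inj: "inj_on f W"
  proof (rule inj_onI)
    fix x y assume "x \<in> W" "y \<in> W" "f x = f y"
    then have "f x (q x) = f y (q x)" by simp
    then have "q x = q y" by (auto simp: f_def coord_vec_def split: if_splits)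
    with q_inj \<open>x \<in> W\<close> \<open>y \<in> W\<close> show "x = y" by (auto dest: inj_onD)
  qed
  have unit: "edist (card W) (f x) (f y) = 1" if "x \<in> W" "y \<in> W" "E x y" for x y
  proof -
    from that irrefl have "q x \<noteq> q y" using inj_onD[OF q_inj] by metis
    with q_lt that have "edist (card W) (f x) (f y) = sqrt 2 * sqrt (1/2)"
      unfolding f_def by (simp add: edist_coord_vecs)
    then show ?thesis by (simp add: real_sqrt_mult[symmetric])
  qed
  have seg: "\<not> on_segment (f w) (f u) (f v)"
    if "w \<in> W" "u \<in> W" "v \<in> W" "w \<noteq> u" "w \<noteq> v" for u v w
  proof
    assume "on_segment (f w) (f u) (f v)"
    then obtain t where "f w = (\<lambda>i. (1 - t) * f u i + t * f v i)" by (auto simp: on_segment_def)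
    then have "f w (q w) = (1 - t) * f u (q w) + t * f v (q w)" by simp
    moreover have "q w \<noteq> q u" "q w \<noteq> q v" using inj_onD[OF q_inj] that by blast+
    ultimately show False by (simp add: f_def coord_vec_def)
  qed
  have "unit_dist_emb (card W) W E f"
    using dim inj seg unit by (simp add: unit_dist_emb_def)
  moreover have "edist (card W) (f x) (\<lambda>i. 0) = sqrt (1/2)" if "x \<in> W" for x
    using q_lt[OF that] by (simp add: f_def edist_coord_vec_0)
  ultimately show ?thesis
    unfolding spherical_emb_def by (intro exI[of _ f] exI[of _ "\<lambda>i. 0"]) (simp add: in_dim_def)
qed

theorem mainTheorem12:
  fixes V :: "'a set" and E :: "'a \<Rightarrow> 'a \<Rightarrow> bool"
  assumes "simple_graph V E"
  shows "sdim (cone_V V) (cone_E V E) > sdim V E"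
proof (cases "V = {}")
  case True
  then show ?thesis by (simp add: sdim_def cone_V_def)
next
  case False
  define P where "P = (\<lambda>k. \<exists>r<1. spherical_emb k r (cone_V V) (cone_E V E))"
  have "finite (cone_V V)" "\<And>x. \<not> cone_E V E x x"
    using assms by (auto simp: simple_graph_def cone_V_def cone_E_def split: option.splits)
  then have "P (card (cone_V V))"
    unfolding P_def using spherical_emb_simplex by (intro exI[of _ "sqrt (1/2)"]) auto
  then have "P (Least P)" by (rule LeastI)
  then obtain r where "spherical_emb (Least P) r (cone_V V) (cone_E V E)" "r < 1"
    unfolding P_def by blast
  then obtain n r' where "Least P = Suc n" "r' < 1" "spherical_emb n r' V E"
    using False by (rule spherical_emb_cone)
  then have "(LEAST k. \<exists>r<1. spherical_emb k r V E) < Least P"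
    using Least_le[of "\<lambda>k. \<exists>r<1. spherical_emb k r V E" n] by fastforce
  with False show ?thesis
    unfolding sdim_def P_def by (simp add: cone_V_def)
qed

end
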